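(* For every integer $n>2$, the finite model $\mathbb{S}^1_n$ of $S^1$ with $2n$ points satisfies $\mathrm{TC}(\mathbb{S}^1_n)\le 3$.
   Context: Finite spaces are finite $T_0$ topological spaces, identified with finite posets: $y\le x$ iff $y$ lies in every open set containing $x$; the minimal open neighborhood of $x$ is $x^\downarrow=\{y: y\le x\}$, and open sets are exactly the down-closed sets. For $n\ge 2$, $\mathbb{S}^1_n=\{x_0,\dots,x_{n-1},y_0,\dots,y_{n-1}\}$ is the finite space whose minimal open sets are $x_i^\downarrow=\{x_i\}$ and $y_i^\downarrow=\{y_i,x_i,x_{i-1 \bmod n}\}$ for $0\le i<n$. Topological complexity is unreduced: for a path-connected space $X$, with $X^I$ the space of paths $[0,1]\to X$ (compact-open topology) and $\pi:X^I\to X\times X$, $\pi(\gamma)=(\gamma(0),\gamma(1))$, $\mathrm{TC}(X)$ is the minimal $k$ such that $X\times X$ is covered by open sets $Q_1,\dots,Q_k$ each admitting a continuous map $s_i:Q_i\to X^I$ with $\pi\circ s_i$ the inclusion. *)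

theory Defs
  imports "HOL-Analysis.Analysis"
begin

(* Points of S^1_n: x_i is encoded as (i, False), y_i as (i, True), 0 <= i < n. *)
definition S1_points :: "nat \<Rightarrow> (nat \<times> bool) set" where
  "S1_points n = {(i, b). i < n}"

definition S1_minopen :: "nat \<Rightarrow> nat \<times> bool \<Rightarrow> (nat \<times> bool) set" where
  "S1_minopen n p = (if snd p then {(fst p, True), (fst p, False), ((fst p + n - 1) mod n, False)}
                     else {(fst p, False)})"

(* the finite space S^1_n: open sets are the sets containing the minimal open
   neighbourhood of each of their points (= down-closed sets) *)
definition S1 :: "nat \<Rightarrow> (nat \<times> bool) topology" where
  "S1 n = topology (\<lambda>U. U \<subseteq> S1_points n \<and> (\<forall>p\<in>U. S1_minopen n p \<subseteq> U))"

lemma istopology_S1: "istopology (\<lambda>U. U \<subseteq> S1_points n \<and> (\<forall>p\<in>U. S1_minopen n p \<subseteq> U))"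
  unfolding istopology_def by blast

abbreviation unit_I :: "real topology" where
  "unit_I \<equiv> top_of_set {0..1}"

definition paths :: "'a topology \<Rightarrow> (real \<Rightarrow> 'a) set" where
  "paths X = {f. continuous_map unit_I X f \<and> f \<in> extensional {0..1}}"

definition path_space :: "'a topology \<Rightarrow> (real \<Rightarrow> 'a) topology" where
  "path_space X = topology_generated_by
     {{f \<in> paths X. f ` K \<subseteq> U} | K U. compactin unit_I K \<and> openin X U}"

definition has_motion_planner :: "'a topology \<Rightarrow> ('a \<times> 'a) set \<Rightarrow> bool" where
  "has_motion_planner X Q \<longleftrightarrow>
     openin (prod_topology X X) Q \<and>
     (\<exists>s. continuous_map (subtopology (prod_topology X X) Q) (path_space X) s \<and>
          (\<forall>p\<in>Q. s p 0 = fst p \<and> s p 1 = snd p))"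

(* unreduced topological complexity *)
definition TC :: "'a topology \<Rightarrow> nat" where
  "TC X = (LEAST k. \<exists>Q :: nat \<Rightarrow> ('a \<times> 'a) set.
             (\<forall>i<k. has_motion_planner X (Q i)) \<and>
             topspace X \<times> topspace X \<subseteq> (\<Union>i<k. Q i))"

end

theory Submission
  imports Defs
begin

(* Removing the maximal point y_k from S^1_n leaves an open subspace A_k, the fence
   x_k < y_(k+1) > x_(k+1) < ... > x_(k-1) of 2n - 1 points. Every pair of points of S^1_n
   avoids one of y_0, y_1, y_2, so the three open sets A_k x A_k, k < 3, cover S^1_n x S^1_n,
   and it remains to give a continuous motion planner on each of them.
   The fence 0 < 1 > 2 < ... > 2m is the image of [0, m] under the continuous map sending an
   integer j to 2j and the open interval (j, j + 1) to 2j + 1; so every order-reversing map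
   from this fence to an Alexandrov space is a path. In A_k, the pair (a, b) is joined by the
   walk descending along the fence from a to its end x_k and climbing from there to b. This
   walk depends monotonically on (a, b), hence the preimages of the subbasic open sets of the
   compact-open topology are down-closed, i.e. open, and the planner is continuous. *)

definition fence_le :: "nat \<Rightarrow> nat \<Rightarrow> bool" where
  "fence_le r' r \<longleftrightarrow> r' = r \<or> odd r \<and> (r' = r + 1 \<or> r' + 1 = r)"

lemma fence_le_refl [simp]: "fence_le r r"
  by (simp add: fence_le_def)

lemma fence_le_min: "fence_le a' a \<Longrightarrow> fence_le (min a' m) (min a m)"
  unfolding fence_le_def min_def by auto

lemma fence_le_min_Suc:
  "even m \<Longrightarrow> fence_le (min a m) (min a (Suc m))"
  "odd m \<Longrightarrow> fence_le (min a (Suc m)) (min a m)"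
  using fence_le_min[of m "Suc m" a] fence_le_min[of "Suc m" m a]
  by (simp_all add: fence_le_def min.commute)

(* For x \<ge> 0: an integer j goes to 2j, the open interval (j, j + 1) to 2j + 1. *)
definition fence_index :: "real \<Rightarrow> nat" where
  "fence_index x = nat (\<lfloor>x\<rfloor> + \<lceil>x\<rceil>)"

lemma fence_index_of_nat [simp]: "fence_index (real m) = 2 * m"
  by (simp add: fence_index_def)

lemma fence_index_le:
  assumes "x \<le> real m"
  shows "fence_index x \<le> 2 * m"
proof -
  have "\<lceil>x\<rceil> \<le> int m"
    using assms by (simp add: ceiling_le)
  moreover have "\<lfloor>x\<rfloor> \<le> int m"
    using calculation floor_le_ceiling[of x] by linarith
  ultimately show ?thesis
    by (simp add: fence_index_def nat_le_iff)
qed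

lemma fence_index_near_int:
  assumes "\<bar>y - of_int m\<bar> < 1"
  shows "fence_le (fence_index (of_int m)) (fence_index y)"
proof -
  consider "y = of_int m" | "of_int m < y" | "y < of_int m"
    by linarith
  then show ?thesis
  proof cases
    case 2
    then have "\<lfloor>y\<rfloor> = m" "\<lceil>y\<rceil> = m + 1"
      using assms by (simp_all add: floor_eq_iff ceiling_eq_iff)
    moreover have "fence_le (nat (2 * m)) (nat (2 * m + 1))"
    proof (cases "0 \<le> m")
      case True
      then have "nat (2 * m + 1) = 2 * nat m + 1" "nat (2 * m) = 2 * nat m"
        by simp_all
      then show ?thesis
        by (simp add: fence_le_def)
    qed (simp add: fence_le_def)
    ultimately show ?thesis
      by (simp add: fence_index_def)
  next
    case 3
    then have "\<lfloor>y\<rfloor> = m - 1" "\<lceil>y\<rceil> = m"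
      using assms by (simp_all add: floor_eq_iff ceiling_eq_iff)
    moreover have "fence_le (nat (2 * m)) (nat (2 * m - 1))"
    proof (cases "0 < m")
      case True
      then have "nat (2 * m - 1) = 2 * nat (m - 1) + 1" "nat (2 * m) = 2 * nat (m - 1) + 2"
        by simp_all
      then show ?thesis
        by (simp add: fence_le_def)
    qed (simp add: fence_le_def)
    ultimately show ?thesis
      by (simp add: fence_index_def)
  qed simp
qed

lemma fence_index_eq_nonint:
  fixes x y :: real
  assumes "x \<notin> \<int>" "\<bar>y - x\<bar> < min (x - \<lfloor>x\<rfloor>) (\<lceil>x\<rceil> - x)"
  shows "fence_index y = fence_index x"
proof -
  have "x \<noteq> of_int \<lfloor>x\<rfloor>"
    using assms(1) by (metis Ints_of_int)
  then have "real_of_int \<lceil>x\<rceil> = of_int \<lfloor>x\<rfloor> + 1"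
    by (simp add: ceiling_altdef)
  moreover have "of_int \<lfloor>x\<rfloor> < y" "y < of_int \<lceil>x\<rceil>"
    using assms(2) unfolding abs_less_iff min_less_iff_conj by linarith+
  ultimately have "\<lfloor>y\<rfloor> = \<lfloor>x\<rfloor>" "\<lceil>y\<rceil> = \<lceil>x\<rceil>"
    unfolding floor_eq_iff ceiling_eq_iff by linarith+
  then show ?thesis
    by (simp add: fence_index_def)
qed

lemma fence_index_near: "\<exists>e>0. \<forall>y. \<bar>y - x\<bar> < e \<longrightarrow> fence_le (fence_index x) (fence_index y)"
proof (cases "x \<in> \<int>")
  case True
  then obtain m where "x = of_int m"
    by (metis Ints_cases)
  then have "\<forall>y. \<bar>y - x\<bar> < 1 \<longrightarrow> fence_le (fence_index x) (fence_index y)"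
    using fence_index_near_int by blast
  then show ?thesis
    using zero_less_one by blast
next
  case False
  then have "of_int \<lfloor>x\<rfloor> < x" "x < of_int \<lceil>x\<rceil>"
    by (metis Ints_of_int less_eq_real_def of_int_floor_le le_of_int_ceiling)+
  then have "0 < min (x - \<lfloor>x\<rfloor>) (\<lceil>x\<rceil> - x)"
    by simp
  moreover have "\<forall>y. \<bar>y - x\<bar> < min (x - \<lfloor>x\<rfloor>) (\<lceil>x\<rceil> - x) \<longrightarrow> fence_le (fence_index x) (fence_index y)"
    using fence_index_eq_nonint[OF False] by simp
  ultimately show ?thesis
    by blast
qed

definition alexandrov_topology :: "'a set \<Rightarrow> ('a \<Rightarrow> 'a set) \<Rightarrow> 'a topology" where
  "alexandrov_topology P N = topology (\<lambda>U. U \<subseteq> P \<and> (\<forall>p\<in>U. N p \<subseteq> U))"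

lemma openin_alexandrov_topology:
  "openin (alexandrov_topology P N) U \<longleftrightarrow> U \<subseteq> P \<and> (\<forall>p\<in>U. N p \<subseteq> U)"
proof -
  have "istopology (\<lambda>U. U \<subseteq> P \<and> (\<forall>p\<in>U. N p \<subseteq> U))"
    unfolding istopology_def by blast
  then show ?thesis
    by (simp add: alexandrov_topology_def)
qed

locale alexandrov_space =
  fixes P :: "'a set" and N :: "'a \<Rightarrow> 'a set"
  assumes nbhd_subset: "p \<in> P \<Longrightarrow> N p \<subseteq> P"
    and nbhd_refl: "p \<in> N p"
    and nbhd_trans: "q \<in> N p \<Longrightarrow> N q \<subseteq> N p"
begin

abbreviation X :: "'a topology" where
  "X \<equiv> alexandrov_topology P N"

lemma topspace_X [simp]: "topspace X = P"
proof
  show "topspace X \<subseteq> P"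
    using openin_topspace[of X] unfolding openin_alexandrov_topology by blast
  show "P \<subseteq> topspace X"
    using nbhd_subset by (intro openin_subset) (auto simp: openin_alexandrov_topology)
qed

lemma openin_nbhd: "p \<in> P \<Longrightarrow> openin X (N p)"
  using nbhd_subset nbhd_trans by (simp add: openin_alexandrov_topology)

lemma openin_prod_if_down_closed:
  assumes "D \<subseteq> P \<times> P"
    and down: "\<And>q q'. q \<in> D \<Longrightarrow> q' \<in> N (fst q) \<times> N (snd q) \<Longrightarrow> q' \<in> D"
  shows "openin (prod_topology X X) D"
proof (subst openin_subopen, intro ballI exI conjI)
  fix q assume "q \<in> D"
  then have "fst q \<in> P" "snd q \<in> P"
    using assms(1) by auto
  then show "openin (prod_topology X X) (N (fst q) \<times> N (snd q))"
    by (simp add: openin_prod_Times_iff openin_nbhd)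
  show "q \<in> N (fst q) \<times> N (snd q)"
    by (simp add: mem_Times_iff nbhd_refl)
  show "N (fst q) \<times> N (snd q) \<subseteq> D"
    using down \<open>q \<in> D\<close> by blast
qed

lemma continuous_map_fence_walk:
  fixes m :: nat
  assumes pts: "\<And>j. j \<le> 2 * m \<Longrightarrow> v j \<in> P"
    and antimono: "\<And>i j. j \<le> 2 * m \<Longrightarrow> fence_le i j \<Longrightarrow> v j \<in> N (v i)"
  shows "continuous_map unit_I X (\<lambda>t. v (fence_index (t * m)))"
  unfolding continuous_map
proof (intro conjI allI impI)
  have index_le: "fence_index (t * m) \<le> 2 * m" if "t \<in> {0..1}" for t :: real
    using that by (intro fence_index_le) (simp add: mult_left_le_one_le)
  then show "(\<lambda>t. v (fence_index (t * m))) ` topspace unit_I \<subseteq> topspace X"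
    using pts by auto
  fix U assume "openin X U"
  then have U: "\<And>p. p \<in> U \<Longrightarrow> N p \<subseteq> U"
    by (simp add: openin_alexandrov_topology)
  show "openin unit_I {t \<in> topspace unit_I. v (fence_index (t * m)) \<in> U}"
    unfolding openin_euclidean_subtopology_iff
  proof (intro conjI ballI)
    fix t assume "t \<in> {t \<in> topspace unit_I. v (fence_index (t * m)) \<in> U}"
    then have t: "t \<in> {0..1}" "v (fence_index (t * m)) \<in> U"
      by auto
    obtain e where "e > 0"
      and e: "\<And>y. \<bar>y - t * m\<bar> < e \<Longrightarrow> fence_le (fence_index (t * m)) (fence_index y)"
      using fence_index_near by blast
    have "v (fence_index (s * m)) \<in> U" if s: "s \<in> {0..1}" "dist s t < e / (m + 1)" for s
    proof -
      have "\<bar>s * m - t * m\<bar> = \<bar>s - t\<bar> * m"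
        by (simp add: abs_mult flip: left_diff_distrib)
      also have "\<dots> \<le> \<bar>s - t\<bar> * (m + 1)"
        by (intro mult_left_mono) auto
      also have "\<dots> < e"
        using s(2) by (simp add: dist_real_def pos_less_divide_eq)
      finally have "fence_le (fence_index (t * m)) (fence_index (s * m))"
        by (rule e)
      then have "v (fence_index (s * m)) \<in> N (v (fence_index (t * m)))"
        by (rule antimono[OF index_le[OF s(1)]])
      then show ?thesis
        using U[OF t(2)] by blast
    qed
    then show "\<exists>d>0. \<forall>s\<in>{0..1}. dist s t < d \<longrightarrow>
        s \<in> {t \<in> topspace unit_I. v (fence_index (t * m)) \<in> U}"
      using \<open>e > 0\<close> by (intro exI[of _ "e / (m + 1)"]) auto
  qed auto
qed

lemma continuous_map_path_space_mono:
  assumes W: "W \<subseteq> P \<times> P" "\<And>q q'. q \<in> W \<Longrightarrow> q' \<in> N (fst q) \<times> N (snd q) \<Longrightarrow> q' \<in> W"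
    and paths: "\<And>q. q \<in> W \<Longrightarrow> s q \<in> paths X"
    and mono: "\<And>q q' t. q \<in> W \<Longrightarrow> q' \<in> N (fst q) \<times> N (snd q) \<Longrightarrow> t \<in> {0..1} \<Longrightarrow> s q' t \<in> N (s q t)"
  shows "continuous_map (subtopology (prod_topology X X) W) (path_space X) s"
  unfolding path_space_def
proof (rule continuous_on_generated_topo)
  have topspace_W: "topspace (subtopology (prod_topology X X) W) = W"
    using W(1) by auto
  fix U assume "U \<in> {{f \<in> paths X. f ` K \<subseteq> V} |K V. compactin unit_I K \<and> openin X V}"
  then obtain K V where U: "U = {f \<in> paths X. f ` K \<subseteq> V}"
    and K: "compactin unit_I K" and V: "openin X V"
    by blast
  have "K \<subseteq> {0..1}"
    using compactin_subset_topspace[OF K] by simp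
  have "openin (prod_topology X X) {q \<in> W. s q ` K \<subseteq> V}"
  proof (rule openin_prod_if_down_closed)
    show "{q \<in> W. s q ` K \<subseteq> V} \<subseteq> P \<times> P"
      using W(1) by auto
    fix q q' assume q: "q \<in> {q \<in> W. s q ` K \<subseteq> V}" and q': "q' \<in> N (fst q) \<times> N (snd q)"
    have "s q' t \<in> V" if "t \<in> K" for t
    proof -
      have "s q' t \<in> N (s q t)"
        using mono q q' that \<open>K \<subseteq> {0..1}\<close> by blast
      moreover have "s q t \<in> V"
        using q that by auto
      ultimately show ?thesis
        using V by (auto simp: openin_alexandrov_topology)
    qed
    moreover have "q' \<in> W"
      using W(2)[of q q'] q q' by blast
    ultimately show "q' \<in> {q \<in> W. s q ` K \<subseteq> V}"
      by blast
  qed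
  moreover have "s -` U \<inter> W = {q \<in> W. s q ` K \<subseteq> V}"
    using paths U by auto
  ultimately show "openin (subtopology (prod_topology X X) W)
      (s -` U \<inter> topspace (subtopology (prod_topology X X) W))"
    unfolding topspace_W openin_subtopology by auto
next
  have "{f \<in> paths X. f ` {} \<subseteq> {}} \<in>
      {{f \<in> paths X. f ` K \<subseteq> V} |K V. compactin unit_I K \<and> openin X V}"
    by (intro CollectI exI[of _ "{}"]) simp
  then show "s ` topspace (subtopology (prod_topology X X) W)
      \<subseteq> \<Union> {{f \<in> paths X. f ` K \<subseteq> V} |K V. compactin unit_I K \<and> openin X V}"
    using paths W(1) by auto
qed

lemma has_motion_planner_fence_walks:
  fixes v :: "nat \<Rightarrow> 'a \<times> 'a \<Rightarrow> 'a" and m :: nat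
  assumes W: "W \<subseteq> P \<times> P" "\<And>q q'. q \<in> W \<Longrightarrow> q' \<in> N (fst q) \<times> N (snd q) \<Longrightarrow> q' \<in> W"
    and ends: "\<And>q. q \<in> W \<Longrightarrow> v 0 q = fst q \<and> v (2 * m) q = snd q"
    and pts: "\<And>q j. q \<in> W \<Longrightarrow> j \<le> 2 * m \<Longrightarrow> v j q \<in> P"
    and antimono: "\<And>q i j. q \<in> W \<Longrightarrow> j \<le> 2 * m \<Longrightarrow> fence_le i j \<Longrightarrow> v j q \<in> N (v i q)"
    and mono: "\<And>q q' j. q \<in> W \<Longrightarrow> q' \<in> N (fst q) \<times> N (snd q) \<Longrightarrow> j \<le> 2 * m \<Longrightarrow> v j q' \<in> N (v j q)"
  shows "has_motion_planner X W"
proof -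
  define s where "s q = (\<lambda>t::real\<in>{0..1}. v (fence_index (t * m)) q)" for q
  have index_le: "fence_index (t * m) \<le> 2 * m" if "t \<in> {0..1}" for t :: real
    using that by (intro fence_index_le) (simp add: mult_left_le_one_le)
  have paths: "s q \<in> paths X" if "q \<in> W" for q
  proof -
    have "continuous_map unit_I X (\<lambda>t. v (fence_index (t * m)) q)"
      using that pts antimono by (intro continuous_map_fence_walk)
    then have "continuous_map unit_I X (s q)"
      by (rule continuous_map_eq) (simp add: s_def)
    then show ?thesis
      by (simp add: paths_def s_def)
  qed
  have "continuous_map (subtopology (prod_topology X X) W) (path_space X) s"
  proof (rule continuous_map_path_space_mono[OF W paths])
    fix q q' and t :: real assume "q \<in> W" "q' \<in> N (fst q) \<times> N (snd q)" "t \<in> {0..1}"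
    then show "s q' t \<in> N (s q t)"
      using mono[OF _ _ index_le] by (simp add: s_def)
  qed
  moreover have "openin (prod_topology X X) W"
    using W by (rule openin_prod_if_down_closed)
  moreover have "s q 0 = fst q \<and> s q 1 = snd q" if "q \<in> W" for q
    using ends[OF that] fence_index_of_nat[of 0] by (simp add: s_def)
  ultimately show ?thesis
    unfolding has_motion_planner_def by blast
qed

end

definition fence_path :: "nat \<Rightarrow> nat \<Rightarrow> nat \<Rightarrow> nat \<Rightarrow> nat" where
  "fence_path c a b j = (if j \<le> c then min a (c - j) else min b (j - c))"

lemma fence_path_0: "a \<le> c \<Longrightarrow> fence_path c a b 0 = a"
  by (simp add: fence_path_def)

lemma fence_path_end: "b \<le> c \<Longrightarrow> fence_path c a b (2 * c) = b"
  by (simp add: fence_path_def)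

lemma fence_path_le: "fence_path c a b j \<le> max a b"
  by (auto simp: fence_path_def min_le_iff_disj le_max_iff_disj)

lemma fence_path_mono:
  "fence_le a' a \<Longrightarrow> fence_le b' b \<Longrightarrow> fence_le (fence_path c a' b' j) (fence_path c a b j)"
  by (simp add: fence_path_def fence_le_min)

lemma fence_path_zigzag:
  assumes "odd c" "odd j" "j < 2 * c"
  shows "fence_le (fence_path c a b j) (fence_path c a b (j - 1))"
    and "fence_le (fence_path c a b j) (fence_path c a b (j + 1))"
proof -
  consider "j < c" | "j = c" | "c < j"
    by linarith
  then have "fence_le (fence_path c a b j) (fence_path c a b (j - 1)) \<and>
      fence_le (fence_path c a b j) (fence_path c a b (j + 1))"
  proof cases
    case 1
    then have "even (c - j)" "c - (j - 1) = Suc (c - j)" "Suc (c - (j + 1)) = c - j"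
        "j - 1 \<le> c" "j + 1 \<le> c"
      using assms by presburger+
    then show ?thesis
      using 1 fence_le_min_Suc[of "c - j" a] fence_le_min_Suc(2)[of "c - (j + 1)" a]
      by (simp add: fence_path_def)
  next
    case 2
    have "fence_le 0 (min r 1)" for r
      by (cases "r = 0") (auto simp: fence_le_def)
    then show ?thesis
      using 2 assms by (simp add: fence_path_def)
  next
    case 3
    then have "even (j - c)" "j - 1 - c = j - c - 1" "Suc (j - c - 1) = j - c" "c < j - 1"
        "j + 1 - c = Suc (j - c)"
      using assms by presburger+
    then show ?thesis
      using 3 fence_le_min_Suc[of "j - c" b] fence_le_min_Suc(2)[of "j - c - 1" b]
      by (simp add: fence_path_def)
  qed
  then show "fence_le (fence_path c a b j) (fence_path c a b (j - 1))"
    and "fence_le (fence_path c a b j) (fence_path c a b (j + 1))"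
    by blast+
qed

lemma fence_path_antimono:
  assumes "odd c" "j \<le> 2 * c" "fence_le i j"
  shows "fence_le (fence_path c a b j) (fence_path c a b i)"
proof (cases "i = j")
  case False
  then have "odd j" "j < 2 * c" "i = j - 1 \<or> i = j + 1"
    using assms unfolding fence_le_def by presburger+
  then show ?thesis
    using fence_path_zigzag[OF \<open>odd c\<close> \<open>odd j\<close> \<open>j < 2 * c\<close>, of a b] by auto
qed simp

lemma S1_alexandrov: "S1 n = alexandrov_topology (S1_points n) (S1_minopen n)"
  by (simp add: S1_def alexandrov_topology_def)

lemma alexandrov_space_S1: "0 < n \<Longrightarrow> alexandrov_space (S1_points n) (S1_minopen n)"
  by unfold_locales (auto simp: S1_points_def S1_minopen_def split: if_splits)

lemma topspace_S1: "0 < n \<Longrightarrow> topspace (S1 n) = S1_points n"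
  using alexandrov_space.topspace_X[OF alexandrov_space_S1] by (simp add: S1_alexandrov)

lemma add_diff_mod_eq_if:
  fixes i k n :: nat
  assumes "k \<le> n" "i < n"
  shows "(i + n - k) mod n = (if k \<le> i then i - k else i + n - k)"
  using assms by (auto simp: mod_if)

lemma Suc_mod_add_diff_mod: "(Suc a mod n + n - 1) mod n = a mod n"
proof (cases "n = 0")
  case False
  then have "(Suc a mod n + n - 1) mod n = (Suc a + (n - 1)) mod n"
    by (simp add: mod_add_left_eq flip: add_diff_assoc)
  also have "\<dots> = a mod n"
    using False by simp
  finally show ?thesis .
qed simp

definition S1_arc :: "nat \<Rightarrow> nat \<Rightarrow> (nat \<times> bool) set" where
  "S1_arc n k = S1_points n - {(k, True)}"

(* S1_arc n k is the fence x_k < y_(k+1) > x_(k+1) < ... > x_(k-1), numbered 0, 1, ..., 2n - 2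
   by arc_pos: x_(k+d) sits at 2d and y_(k+d) at 2d - 1, indices mod n. *)
definition arc_pos :: "nat \<Rightarrow> nat \<Rightarrow> nat \<times> bool \<Rightarrow> nat" where
  "arc_pos n k = (\<lambda>(i, b). 2 * ((i + n - k) mod n) - of_bool b)"

definition arc_point :: "nat \<Rightarrow> nat \<Rightarrow> nat \<Rightarrow> nat \<times> bool" where
  "arc_point n k r = ((k + (r + 1) div 2) mod n, odd r)"

lemma arc_down_closed: "p \<in> S1_arc n k \<Longrightarrow> p' \<in> S1_minopen n p \<Longrightarrow> p' \<in> S1_arc n k"
  by (cases p) (auto simp: S1_arc_def S1_points_def S1_minopen_def split: if_splits)

lemma arc_pos_le:
  assumes "p \<in> S1_arc n k"
  shows "arc_pos n k p \<le> 2 * n - 2"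
proof (cases p)
  case (Pair i b)
  then have "(i + n - k) mod n < n"
    using assms by (auto simp: S1_arc_def S1_points_def)
  then show ?thesis
    using Pair by (auto simp: arc_pos_def)
qed

lemma arc_point_arc_pos:
  assumes "k < n" "p \<in> S1_arc n k"
  shows "arc_point n k (arc_pos n k p) = p"
proof (cases p)
  case (Pair i b)
  define d where "d = (i + n - k) mod n"
  have "i < n" "b \<Longrightarrow> i \<noteq> k"
    using assms Pair by (auto simp: S1_arc_def S1_points_def)
  then have "b \<Longrightarrow> 0 < d"
    using assms by (auto simp: d_def add_diff_mod_eq_if)
  then have "(2 * d - of_bool b + 1) div 2 = d" "odd (2 * d - of_bool b) \<longleftrightarrow> b"
    by (cases b; simp; presburger)+
  moreover have "(k + d) mod n = i"
  proof -
    have "(k + d) mod n = (k + (i + n - k)) mod n"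
      by (simp add: d_def mod_add_right_eq)
    also have "\<dots> = i"
      using \<open>k < n\<close> \<open>i < n\<close> by simp
    finally show ?thesis .
  qed
  ultimately show ?thesis
    using Pair by (simp add: arc_pos_def arc_point_def d_def)
qed

lemma arc_point_in_arc:
  assumes "k < n" "r \<le> 2 * n - 2"
  shows "arc_point n k r \<in> S1_arc n k"
proof -
  have "arc_point n k r \<noteq> (k, True)"
  proof
    assume "arc_point n k r = (k, True)"
    then have "odd r" "(k + (r + 1) div 2) mod n = k"
      unfolding arc_point_def by auto
    moreover from \<open>odd r\<close> have "0 < (r + 1) div 2" "(r + 1) div 2 < n"
      using assms by presburger+
    moreover have "(k + (r + 1) div 2) mod n \<noteq> k" if "n \<le> k + (r + 1) div 2"
      using that \<open>(r + 1) div 2 < n\<close> \<open>k < n\<close> by (subst mod_if) simp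
    ultimately show False
      by (cases "k + (r + 1) div 2 < n") simp_all
  qed
  moreover have "fst (arc_point n k r) < n"
    using assms by (simp add: arc_point_def)
  ultimately show ?thesis
    by (cases "arc_point n k r") (simp add: S1_arc_def S1_points_def)
qed

lemma arc_point_mono: "fence_le r' r \<Longrightarrow> arc_point n k r' \<in> S1_minopen n (arc_point n k r)"
proof (unfold fence_le_def, elim disjE conjE)
  assume "r' = r"
  then show ?thesis
    by (cases "arc_point n k r") (simp add: S1_minopen_def)
next
  assume "odd r" "r' = r + 1"
  then have "(r' + 1) div 2 = (r + 1) div 2"
    by presburger
  then show ?thesis
    using \<open>odd r\<close> \<open>r' = r + 1\<close> by (simp add: arc_point_def S1_minopen_def)
next
  assume "odd r" "r' + 1 = r"
  then have "(r' + 1) div 2 = r' div 2" "(r + 1) div 2 = Suc (r' div 2)" "even r'"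
    by presburger+
  then have "arc_point n k r' = ((k + r' div 2) mod n, False)"
    "arc_point n k r = (Suc (k + r' div 2) mod n, True)"
    using \<open>odd r\<close> by (simp_all add: arc_point_def)
  then show ?thesis
    using Suc_mod_add_diff_mod[of "k + r' div 2" n] by (simp add: S1_minopen_def)
qed

lemma arc_pos_mono:
  assumes "k < n" "p \<in> S1_arc n k" "p' \<in> S1_minopen n p"
  shows "fence_le (arc_pos n k p') (arc_pos n k p)"
proof (cases p)
  case (Pair i b)
  have "i < n"
    using assms Pair by (auto simp: S1_arc_def S1_points_def)
  show ?thesis
  proof (cases b)
    case False
    then show ?thesis
      using assms Pair by (simp add: S1_minopen_def fence_le_def)
  next
    case True
    define d where "d = (i + n - k) mod n"
    have "i \<noteq> k"
      using assms Pair True by (auto simp: S1_arc_def)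
    then have "0 < d"
      using assms \<open>i < n\<close> by (auto simp: d_def add_diff_mod_eq_if)
    define i' where "i' = (i + n - 1) mod n"
    have "i' = (if i = 0 then n - 1 else i - 1)" "i' < n"
      using add_diff_mod_eq_if[of 1 n i] \<open>i < n\<close> by (auto simp: i'_def)
    moreover have "d = (if k \<le> i then i - k else i + n - k)"
      using add_diff_mod_eq_if[of k n i] assms \<open>i < n\<close> by (simp add: d_def)
    ultimately have "(i' + n - k) mod n = d - 1"
      using add_diff_mod_eq_if[of k n i'] assms \<open>i < n\<close> \<open>i \<noteq> k\<close> by auto
    moreover have "p' = (i, True) \<or> p' = (i, False) \<or> p' = (i', False)"
      using assms Pair True by (auto simp: S1_minopen_def i'_def)
    ultimately show ?thesis
      using Pair True \<open>0 < d\<close> by (auto simp: arc_pos_def fence_le_def d_def)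
  qed
qed

definition arc_walk :: "nat \<Rightarrow> nat \<Rightarrow> nat \<Rightarrow> (nat \<times> bool) \<times> (nat \<times> bool) \<Rightarrow> nat \<times> bool" where
  "arc_walk n k j q =
     arc_point n k (fence_path (2 * n - 1) (arc_pos n k (fst q)) (arc_pos n k (snd q)) j)"

lemma arc_walk_ends:
  assumes "k < n" "q \<in> S1_arc n k \<times> S1_arc n k"
  shows "arc_walk n k 0 q = fst q" "arc_walk n k (2 * (2 * n - 1)) q = snd q"
proof -
  have "fst q \<in> S1_arc n k" "snd q \<in> S1_arc n k"
    using assms(2) by auto
  moreover from this have "arc_pos n k (fst q) \<le> 2 * n - 1" "arc_pos n k (snd q) \<le> 2 * n - 1"
    using arc_pos_le[of "fst q" n k] arc_pos_le[of "snd q" n k] by auto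
  ultimately show "arc_walk n k 0 q = fst q" "arc_walk n k (2 * (2 * n - 1)) q = snd q"
    using assms(1) by (simp_all add: arc_walk_def fence_path_0 fence_path_end arc_point_arc_pos)
qed

lemma arc_walk_in_arc:
  assumes "k < n" "q \<in> S1_arc n k \<times> S1_arc n k"
  shows "arc_walk n k j q \<in> S1_arc n k"
proof -
  have "arc_pos n k (fst q) \<le> 2 * n - 2" "arc_pos n k (snd q) \<le> 2 * n - 2"
    using assms(2) arc_pos_le by auto
  then have "fence_path (2 * n - 1) (arc_pos n k (fst q)) (arc_pos n k (snd q)) j \<le> 2 * n - 2"
    using fence_path_le by (meson max.boundedI order_trans)
  then show ?thesis
    using arc_point_in_arc[OF assms(1)] by (simp add: arc_walk_def)
qed

lemma arc_walk_antimono: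
  assumes "0 < n" "j \<le> 2 * (2 * n - 1)" "fence_le i j"
  shows "arc_walk n k j q \<in> S1_minopen n (arc_walk n k i q)"
proof -
  have "odd (2 * n - 1)"
    using assms(1) by simp
  from fence_path_antimono[OF this assms(2,3)] show ?thesis
    by (simp add: arc_walk_def arc_point_mono)
qed

lemma arc_walk_mono:
  assumes "k < n" "q \<in> S1_arc n k \<times> S1_arc n k" "q' \<in> S1_minopen n (fst q) \<times> S1_minopen n (snd q)"
  shows "arc_walk n k j q' \<in> S1_minopen n (arc_walk n k j q)"
proof -
  have "fence_le (arc_pos n k (fst q')) (arc_pos n k (fst q))"
    "fence_le (arc_pos n k (snd q')) (arc_pos n k (snd q))"
    using assms arc_pos_mono[OF assms(1), of "fst q" "fst q'"]
      arc_pos_mono[OF assms(1), of "snd q" "snd q'"]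
    by (auto simp: mem_Times_iff)
  then show ?thesis
    by (simp add: arc_walk_def arc_point_mono fence_path_mono)
qed

lemma has_motion_planner_arc:
  assumes "k < n"
  shows "has_motion_planner (S1 n) (S1_arc n k \<times> S1_arc n k)"
proof -
  have "has_motion_planner (alexandrov_topology (S1_points n) (S1_minopen n))
      (S1_arc n k \<times> S1_arc n k)"
  proof (rule alexandrov_space.has_motion_planner_fence_walks[OF alexandrov_space_S1,
        where v = "arc_walk n k" and m = "2 * n - 1"])
    show "0 < n"
      using assms by simp
    show "S1_arc n k \<times> S1_arc n k \<subseteq> S1_points n \<times> S1_points n"
      by (auto simp: S1_arc_def)
    show "q' \<in> S1_arc n k \<times> S1_arc n k"
      if "q \<in> S1_arc n k \<times> S1_arc n k" "q' \<in> S1_minopen n (fst q) \<times> S1_minopen n (snd q)" for q q'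
      using that by (simp add: mem_Times_iff) (blast intro: arc_down_closed)
  qed (use assms arc_walk_ends arc_walk_in_arc arc_walk_antimono arc_walk_mono
      in \<open>auto simp: S1_arc_def\<close>)
  then show ?thesis
    by (simp add: S1_alexandrov)
qed

lemma S1_points_Times_subset_arcs:
  assumes "2 < n"
  shows "S1_points n \<times> S1_points n \<subseteq> (\<Union>k<3. S1_arc n k \<times> S1_arc n k)"
proof
  fix z assume z: "z \<in> S1_points n \<times> S1_points n"
  have "\<exists>k<3. (k, True) \<noteq> fst z \<and> (k, True) \<noteq> snd z"
    by (cases "fst z = (0, True) \<or> snd z = (0, True)";
        cases "fst z = (1, True) \<or> snd z = (1, True)")
      (auto intro: exI[of _ 0] exI[of _ 1] exI[of _ 2])
  then obtain k where "k < 3" "(k, True) \<noteq> fst z" "(k, True) \<noteq> snd z"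
    by blast
  then have "z \<in> S1_arc n k \<times> S1_arc n k"
    using z by (auto simp: S1_arc_def mem_Times_iff)
  then show "z \<in> (\<Union>k<3. S1_arc n k \<times> S1_arc n k)"
    using \<open>k < 3\<close> by blast
qed

theorem theorem1:
  fixes n :: nat
  assumes "n > 2"
  shows "TC (S1 n) \<le> 3"
proof -
  have "\<forall>k<3. has_motion_planner (S1 n) (S1_arc n k \<times> S1_arc n k)"
    using assms by (auto intro: has_motion_planner_arc)
  moreover have "topspace (S1 n) \<times> topspace (S1 n) \<subseteq> (\<Union>k<3. S1_arc n k \<times> S1_arc n k)"
    using assms S1_points_Times_subset_arcs by (simp add: topspace_S1)
  ultimately have "\<exists>Q :: nat \<Rightarrow> _. (\<forall>k<3. has_motion_planner (S1 n) (Q k)) \<and>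
      topspace (S1 n) \<times> topspace (S1 n) \<subseteq> (\<Union>k<3. Q k)"
    by (intro exI[of _ "\<lambda>k. S1_arc n k \<times> S1_arc n k"]) simp
  then show ?thesis
    unfolding TC_def by (rule Least_le)
qed

end
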